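(* Let $X$ be a separable Banach space and $(E_n)$ a finite dimensional Markushevich decomposition (FMD) of $X$ with biorthogonal sequence $(F_n)$. The following are equivalent: (1) $(E_n)$ is shrinking, i.e. $\mathrm{span}(F_j:j\in\mathbb N)$ is norm dense in $X^*$; (2) for all $x^*\in X^*$, $\lim_{n\to\infty}\|x^*|_{\mathrm{span}(E_j:j>n)}\|=0$; (3) every bounded sequence $(y_n)$ with $y_n\in\mathrm{span}(E_j:j\in\mathbb N, j\ge n)$ for each $n$ is weakly null.
   Context: A sequence $(E_k)$ of finite dimensional subspaces of $X$ is an FMD of $X$ if, with $F_k=\mathrm{span}(E_j:j\ne k)^\perp=\{f\in X^*: f|_{E_j}=0 \text{ for all } j\neq k\}$ (the biorthogonal sequence), the following hold: (a) $\mathrm{span}(E_k:k\in\mathbb N)$ is dense in $X$; (b) $E_k\cap\overline{\mathrm{span}(E_j:j\ne k)}=\{0\}$ for every $k$; (c) $(F_k)$ is total, i.e. if $x\in X$ and $f(x)=0$ for all $f\in F_k$ and all $k$, then $x=0$. *)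

theory Defs
  imports "HOL-Analysis.Analysis"
begin

text \<open>Real Banach space X = type 'a :: banach; dual X* = 'a \<Rightarrow>L real.\<close>

definition separable_space :: "'a::metric_space itself \<Rightarrow> bool" where
  "separable_space _ \<longleftrightarrow> (\<exists>D::'a set. countable D \<and> closure D = UNIV)"

definition biorth :: "(nat \<Rightarrow> 'a::real_normed_vector set) \<Rightarrow> nat \<Rightarrow> ('a \<Rightarrow>\<^sub>L real) set" where
  "biorth E k = {f. \<forall>j. j \<noteq> k \<longrightarrow> (\<forall>x\<in>E j. blinfun_apply f x = 0)}"

definition FMD :: "(nat \<Rightarrow> 'a::real_normed_vector set) \<Rightarrow> bool" where
  "FMD E \<longleftrightarrow>
     (\<forall>k. subspace (E k) \<and> (\<exists>B. finite B \<and> E k = span B)) \<and>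
     closure (span (\<Union>k. E k)) = UNIV \<and>
     (\<forall>k. E k \<inter> closure (span (\<Union>j\<in>-{k}. E j)) = {0}) \<and>
     (\<forall>x. (\<forall>k. \<forall>f\<in>biorth E k. blinfun_apply f x = 0) \<longrightarrow> x = 0)"

definition shrinking :: "(nat \<Rightarrow> 'a::real_normed_vector set) \<Rightarrow> bool" where
  "shrinking E \<longleftrightarrow> closure (span (\<Union>k. biorth E k)) = UNIV"

definition restr_norm :: "('a::real_normed_vector \<Rightarrow>\<^sub>L real) \<Rightarrow> 'a set \<Rightarrow> real" where
  "restr_norm f S = Sup {\<bar>blinfun_apply f x\<bar> | x. x \<in> S \<and> norm x \<le> 1}"

definition weakly_null :: "(nat \<Rightarrow> 'a::real_normed_vector) \<Rightarrow> bool" where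
  "weakly_null y \<longleftrightarrow> (\<forall>f::'a \<Rightarrow>\<^sub>L real. (\<lambda>n. blinfun_apply f (y n)) \<longlonglongrightarrow> 0)"

end

theory Submission
  imports Defs
begin

text \<open>
  (1) \<Longrightarrow> (2): a functional in the span of the \<open>F k\<close> vanishes on some tail
  \<open>span (E j : j > n)\<close>, so the norm of \<open>f\<close> on that tail is at most its distance to that span.

  (2) \<Longrightarrow> (1): if \<open>f\<close> has norm \<open>r\<close> on a tail, then, since the tail and the finitely many
  finite-dimensional \<open>E j\<close> with \<open>j \<le> n\<close> span a dense subspace, finitely many Hahn-Banach steps
  followed by extension by continuity give \<open>G\<close> with \<open>norm G \<le> r\<close> and \<open>G = f\<close> on the tail.
  Then \<open>f - G\<close> vanishes on the tail, and such functionals lie in \<open>span (F k)\<close>: the restriction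
  of any functional to \<open>E k\<close> extends to an element of \<open>F k\<close>, because the projection onto the
  finite-dimensional \<open>E k\<close> along the closed span of the other \<open>E j\<close> is bounded.

  (2) \<Longleftrightarrow> (3): \<open>\<bar>f (y (n + 1))\<bar>\<close> is at most the norm of \<open>f\<close> on the \<open>n\<close>-th tail times
  \<open>sup (norm (y n))\<close>; conversely, almost norming unit vectors in the tails are weakly null.
\<close>

definition linear_on :: "'a::real_vector set \<Rightarrow> ('a \<Rightarrow> real) \<Rightarrow> bool" where
  "linear_on T h \<longleftrightarrow> (\<forall>x\<in>T. \<forall>y\<in>T. h (x + y) = h x + h y) \<and> (\<forall>x\<in>T. \<forall>c. h (c *\<^sub>R x) = c * h x)"

definition norm_bounded_on :: "'a::real_normed_vector set \<Rightarrow> ('a \<Rightarrow> real) \<Rightarrow> real \<Rightarrow> bool" where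
  "norm_bounded_on T h r \<longleftrightarrow> (\<forall>x\<in>T. \<bar>h x\<bar> \<le> r * norm x)"

lemma linear_on_add: "linear_on T h \<Longrightarrow> x \<in> T \<Longrightarrow> y \<in> T \<Longrightarrow> h (x + y) = h x + h y"
  and linear_on_scale: "linear_on T h \<Longrightarrow> x \<in> T \<Longrightarrow> h (c *\<^sub>R x) = c * h x"
  unfolding linear_on_def by blast+

lemma linear_on_blinfun: "linear_on T (blinfun_apply f)"
  unfolding linear_on_def by (simp add: blinfun.add_right blinfun.scaleR_right)

lemma linear_on_diff:
  assumes "linear_on T h" "subspace T" "x \<in> T" "y \<in> T"
  shows "h (x - y) = h x - h y"
proof -
  have "h (x + (-1) *\<^sub>R y) = h x + h ((-1) *\<^sub>R y)"
    using assms subspace_scale by (blast intro: linear_on_add)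
  thus ?thesis using linear_on_scale[OF assms(1,4), of "-1"] by simp
qed

lemma subspace_closure:
  fixes W :: "'a::real_normed_vector set"
  assumes "subspace W"
  shows "subspace (closure W)"
  unfolding subspace_def
proof (intro conjI ballI allI)
  show "0 \<in> closure W" using assms closure_subset subspace_0 by blast
next
  fix x y assume "x \<in> closure W" "y \<in> closure W"
  then obtain s t where s: "\<forall>n. s n \<in> W" "s \<longlonglongrightarrow> x" and t: "\<forall>n. t n \<in> W" "t \<longlonglongrightarrow> y"
    by (meson closure_sequential)
  have "\<forall>n. s n + t n \<in> W" using s t assms subspace_add by blast
  moreover have "(\<lambda>n. s n + t n) \<longlonglongrightarrow> x + y" using s t by (intro tendsto_add) auto
  ultimately show "x + y \<in> closure W" by (meson closure_sequential)
next
  fix c and x assume "x \<in> closure W"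
  then obtain s where s: "\<forall>n. s n \<in> W" "s \<longlonglongrightarrow> x" by (meson closure_sequential)
  have "\<forall>n. c *\<^sub>R s n \<in> W" using s assms subspace_scale by blast
  moreover have "(\<lambda>n. c *\<^sub>R s n) \<longlonglongrightarrow> c *\<^sub>R x" using s by (intro tendsto_scaleR) auto
  ultimately show "c *\<^sub>R x \<in> closure W" by (meson closure_sequential)
qed

lemma continuous_eq_on_dense:
  fixes f g :: "'a::topological_space \<Rightarrow> 'b::t2_space"
  assumes "closure U = UNIV" "continuous_on UNIV f" "continuous_on UNIV g" "\<And>x. x \<in> U \<Longrightarrow> f x = g x"
  shows "f x = g x"
proof -
  have "closure U \<subseteq> {x. f x = g x}"
    using assms(2-4) by (intro closure_minimal) (auto simp: closed_Collect_eq)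
  thus ?thesis using assms(1) by auto
qed

lemma lipschitz_on_if_norm_bounded_on:
  assumes "subspace U" "linear_on U g" "norm_bounded_on U g r" "r \<ge> 0"
  shows "r-lipschitz_on U g"
  unfolding lipschitz_on_def
proof (intro conjI ballI \<open>r \<ge> 0\<close>)
  fix x y assume xy: "x \<in> U" "y \<in> U"
  hence "\<bar>g (x - y)\<bar> \<le> r * norm (x - y)"
    using assms subspace_diff unfolding norm_bounded_on_def by blast
  thus "dist (g x) (g y) \<le> r * dist x y"
    using linear_on_diff[OF assms(2,1) xy] by (simp add: dist_norm dist_real_def)
qed

lemma bounded_linear_if_linear_on_dense:
  fixes h :: "'a::real_normed_vector \<Rightarrow> real"
  assumes U: "subspace U" "closure U = UNIV" and hc: "continuous_on UNIV h"
    and lin: "linear_on U h" and bnd: "norm_bounded_on U h r"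
  shows "bounded_linear h" and "\<bar>h x\<bar> \<le> r * norm x"
proof -
  have hadd: "h (x + y) = h x + h y" for x y
  proof -
    have "h (fst p + snd p) = h (fst p) + h (snd p)" for p
    proof (rule continuous_eq_on_dense[of "U \<times> U"])
      show "closure (U \<times> U) = UNIV" by (simp add: closure_Times U(2))
      show "continuous_on UNIV (\<lambda>p. h (fst p + snd p))"
        by (rule continuous_on_compose2[OF hc]) (auto intro!: continuous_intros)
      show "continuous_on UNIV (\<lambda>p. h (fst p) + h (snd p))"
        by (intro continuous_intros continuous_on_compose2[OF hc]) auto
    qed (auto intro: linear_on_add[OF lin])
    from this[of "(x, y)"] show ?thesis by simp
  qed
  have hscale: "h (c *\<^sub>R x) = c * h x" for c x
  proof (rule continuous_eq_on_dense[OF U(2)])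
    show "continuous_on UNIV (\<lambda>x. h (c *\<^sub>R x))"
      by (rule continuous_on_compose2[OF hc]) (auto intro!: continuous_intros)
  qed (auto intro: hc continuous_intros linear_on_scale[OF lin])
  have hb: "\<bar>h x\<bar> \<le> r * norm x" for x
  proof -
    have "closure U \<subseteq> {x. \<bar>h x\<bar> \<le> r * norm x}"
      using bnd unfolding norm_bounded_on_def
      by (intro closure_minimal closed_Collect_le continuous_intros hc
            continuous_on_compose2[OF hc]) auto
    thus ?thesis using U(2) by auto
  qed
  show "bounded_linear h"
    by (rule bounded_linear_intro[where K = r]) (use hadd hscale hb in \<open>auto simp: abs_le_iff mult.commute\<close>)
  show "\<bar>h x\<bar> \<le> r * norm x" by (rule hb)
qed

lemma functional_extension_from_dense:
  fixes g :: "'a::real_normed_vector \<Rightarrow> real"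
  assumes U: "subspace U" "closure U = UNIV"
    and lin: "linear_on U g" and bnd: "norm_bounded_on U g r" and r: "r \<ge> 0"
  obtains G :: "'a \<Rightarrow>\<^sub>L real" where "\<And>x. x \<in> U \<Longrightarrow> G x = g x" "norm G \<le> r"
proof -
  have "uniformly_continuous_on U g"
    by (rule lipschitz_on_uniformly_continuous[OF lipschitz_on_if_norm_bounded_on[OF U(1) lin bnd r]])
  then obtain h where h: "uniformly_continuous_on UNIV h" "\<And>x. x \<in> U \<Longrightarrow> g x = h x"
    using uniformly_continuous_on_extension_on_closure U(2) by metis
  have hc: "continuous_on UNIV h" using h(1) uniformly_continuous_imp_continuous by blast
  have lin_h: "linear_on U h" and bnd_h: "norm_bounded_on U h r"
    using lin bnd h(2) unfolding linear_on_def norm_bounded_on_def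
    by (auto simp: subspace_add[OF U(1)] subspace_scale[OF U(1)])
  note h_props = bounded_linear_if_linear_on_dense[OF U hc lin_h bnd_h]
  have "norm (Blinfun h) \<le> r"
    by (rule norm_blinfun_bound[OF r]) (simp add: bounded_linear_Blinfun_apply h_props)
  with that[of "Blinfun h"] show thesis
    using h(2) by (simp add: bounded_linear_Blinfun_apply h_props(1))
qed

lemma linear_on_direct_sum:
  fixes f g :: "'a::real_vector \<Rightarrow> real"
  assumes V: "subspace V" and W: "subspace W" and VW: "V \<inter> W \<subseteq> {0}"
    and f: "linear_on V f" and g: "linear_on W g"
  obtains h where "linear_on {v + w | v w. v \<in> V \<and> w \<in> W} h"
    and "\<And>v w. v \<in> V \<Longrightarrow> w \<in> W \<Longrightarrow> h (v + w) = f v + g w"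
proof -
  have unique: "v = v' \<and> w = w'"
    if "v \<in> V" "w \<in> W" "v' \<in> V" "w' \<in> W" "v + w = v' + w'" for v w v' w'
  proof -
    have "v - v' = w' - w"
      using that(5) by (metis add_diff_cancel_left add_diff_cancel_right' diff_diff_eq2)
    moreover have "v - v' \<in> V" "w' - w \<in> W" using that V W subspace_diff by blast+
    ultimately have "v - v' \<in> V \<inter> W" by simp
    with VW have "v - v' \<in> {0}" by (rule subsetD)
    hence "v = v'" by simp
    thus ?thesis using that(5) by simp
  qed
  define h where "h x = (THE y. \<exists>v\<in>V. \<exists>w\<in>W. x = v + w \<and> y = f v + g w)" for x
  have h: "h (v + w) = f v + g w" if vw: "v \<in> V" "w \<in> W" for v w
    unfolding h_def
  proof (rule the_equality)
    show "\<exists>v'\<in>V. \<exists>w'\<in>W. v + w = v' + w' \<and> f v + g w = f v' + g w'"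
      using vw by (intro bexI[of _ v] bexI[of _ w]) simp_all
  next
    fix y assume "\<exists>v'\<in>V. \<exists>w'\<in>W. v + w = v' + w' \<and> y = f v' + g w'"
    then obtain v' w' where "v' \<in> V" "w' \<in> W" "v + w = v' + w'" "y = f v' + g w'" by blast
    thus "y = f v + g w" using unique[OF vw] by simp
  qed
  have "linear_on {v + w | v w. v \<in> V \<and> w \<in> W} h"
    unfolding linear_on_def
  proof (intro conjI ballI allI, goal_cases add scale)
    case (add x y)
    then obtain v w v' w' where vw: "v \<in> V" "w \<in> W" "v' \<in> V" "w' \<in> W" "x = v + w" "y = v' + w'"
      by blast
    have "x + y = (v + v') + (w + w')" unfolding vw(5,6) by (simp add: algebra_simps)
    hence "h (x + y) = f (v + v') + g (w + w')"
      using h[of "v + v'" "w + w'"] vw(1-4) subspace_add[OF V] subspace_add[OF W] by simp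
    also have "\<dots> = h x + h y"
      unfolding vw(5,6) h[OF vw(1,2)] h[OF vw(3,4)]
      using vw(1-4) linear_on_add[OF f] linear_on_add[OF g] by simp
    finally show ?case .
  next
    case (scale x c)
    then obtain v w where vw: "v \<in> V" "w \<in> W" "x = v + w" by blast
    have "c *\<^sub>R x = c *\<^sub>R v + c *\<^sub>R w" unfolding vw(3) by (simp add: scaleR_add_right)
    hence "h (c *\<^sub>R x) = f (c *\<^sub>R v) + g (c *\<^sub>R w)"
      using h[of "c *\<^sub>R v" "c *\<^sub>R w"] vw(1,2) subspace_scale[OF V] subspace_scale[OF W] by simp
    also have "\<dots> = c * h x"
      unfolding vw(3) h[OF vw(1,2)]
      using vw(1,2) linear_on_scale[OF f] linear_on_scale[OF g] by (simp add: distrib_left)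
    finally show ?case .
  qed
  with that h show thesis by blast
qed

lemma hahn_banach_gap:
  fixes h :: "'a::real_normed_vector \<Rightarrow> real"
  assumes T: "subspace T" and lin: "linear_on T h" and bnd: "norm_bounded_on T h r" and r: "r \<ge> 0"
  obtains c where "\<And>t. t \<in> T \<Longrightarrow> h t - r * norm (t - v) \<le> c"
    and "\<And>s. s \<in> T \<Longrightarrow> c \<le> r * norm (s + v) - h s"
proof -
  have key: "h t - r * norm (t - v) \<le> r * norm (s + v) - h s" if "t \<in> T" "s \<in> T" for t s
  proof -
    have "h t + h s = h (t + s)" using linear_on_add[OF lin that] by simp
    also have "\<dots> \<le> r * norm (t + s)"
      using bnd subspace_add[OF T that] unfolding norm_bounded_on_def by fastforce
    also have "\<dots> \<le> r * (norm (t - v) + norm (s + v))"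
      using norm_triangle_ineq[of "t - v" "s + v"] r by (intro mult_left_mono) simp_all
    finally show ?thesis by (simp add: algebra_simps)
  qed
  define A where "A = {h t - r * norm (t - v) | t. t \<in> T}"
  have "0 \<in> T" using T subspace_0 by blast
  hence "A \<noteq> {}" "bdd_above A"
    unfolding A_def using key by (auto intro!: bdd_aboveI[where M = "r * norm (0 + v) - h 0"])
  hence "\<And>t. t \<in> T \<Longrightarrow> h t - r * norm (t - v) \<le> Sup A"
    and "\<And>s. s \<in> T \<Longrightarrow> Sup A \<le> r * norm (s + v) - h s"
    using key by (auto intro!: cSup_upper cSup_least simp: A_def)
  with that show thesis by blast
qed

lemma hahn_banach_gap_bound:
  fixes h :: "'a::real_normed_vector \<Rightarrow> real"
  assumes T: "subspace T" and lin: "linear_on T h" and bnd: "norm_bounded_on T h r"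
    and lower: "\<And>t. t \<in> T \<Longrightarrow> h t - r * norm (t - v) \<le> c"
    and upper: "\<And>s. s \<in> T \<Longrightarrow> c \<le> r * norm (s + v) - h s"
    and t: "t \<in> T"
  shows "h t + a * c \<le> r * norm (t + a *\<^sub>R v)"
proof (cases a "0::real" rule: linorder_cases)
  case equal
  thus ?thesis using bnd t unfolding norm_bounded_on_def by fastforce
next
  case greater
  have s: "inverse a *\<^sub>R t \<in> T" using t T subspace_scale by blast
  have "a * c \<le> a * (r * norm (inverse a *\<^sub>R t + v)) - a * h (inverse a *\<^sub>R t)"
    using mult_left_mono[OF upper[OF s], of a] greater by (simp add: right_diff_distrib)
  also have "a * h (inverse a *\<^sub>R t) = h t"
    using greater linear_on_scale[OF lin t, of "inverse a"] by simp
  also have "a * (r * norm (inverse a *\<^sub>R t + v)) = r * norm (a *\<^sub>R (inverse a *\<^sub>R t + v))"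
    using greater by simp
  also have "a *\<^sub>R (inverse a *\<^sub>R t + v) = t + a *\<^sub>R v"
    using greater by (simp add: scaleR_add_right)
  finally show ?thesis by simp
next
  case less
  define b where "b = - a"
  have b: "b > 0" using less b_def by simp
  have s: "inverse b *\<^sub>R t \<in> T" using t T subspace_scale by blast
  have "b * h (inverse b *\<^sub>R t) - b * (r * norm (inverse b *\<^sub>R t - v)) \<le> b * c"
    using mult_left_mono[OF lower[OF s], of b] b by (simp add: right_diff_distrib)
  also have "b * h (inverse b *\<^sub>R t) = h t"
    using b linear_on_scale[OF lin t, of "inverse b"] by simp
  also have "b * (r * norm (inverse b *\<^sub>R t - v)) = r * norm (b *\<^sub>R (inverse b *\<^sub>R t - v))"
    using b by simp
  also have "b *\<^sub>R (inverse b *\<^sub>R t - v) = t + a *\<^sub>R v"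
    using b by (simp add: scaleR_diff_right b_def)
  finally show ?thesis by (simp add: b_def)
qed

lemma span_insert_subspace:
  assumes "subspace T"
  shows "span (insert v T) = {t + a *\<^sub>R v | t a. t \<in> T}"
proof (intro set_eqI iffI)
  fix x assume "x \<in> span (insert v T)"
  then obtain a where "x - a *\<^sub>R v \<in> span T" by (auto simp: span_insert)
  hence "x - a *\<^sub>R v \<in> T" using span_eq_iff[THEN iffD2, OF assms] by simp
  thus "x \<in> {t + a *\<^sub>R v | t a. t \<in> T}" by (intro CollectI exI[of _ "x - a *\<^sub>R v"] exI[of _ a]) simp
next
  fix x assume "x \<in> {t + a *\<^sub>R v | t a. t \<in> T}"
  then obtain t a where t: "t \<in> T" and x: "x = t + a *\<^sub>R v" by blast
  have "t \<in> span (insert v T)" "v \<in> span (insert v T)" using t by (simp_all add: span_base)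
  thus "x \<in> span (insert v T)" unfolding x by (intro span_add span_scale)
qed

lemma linear_on_span_singleton:
  assumes "v \<noteq> 0"
  obtains g where "linear_on (span {v}) g" "\<And>a. g (a *\<^sub>R v) = a * c"
proof
  define g where "g x = (THE a. x = a *\<^sub>R v) * c" for x
  show g: "g (a *\<^sub>R v) = a * c" for a
    unfolding g_def using assms by (subst the_equality) auto
  show "linear_on (span {v}) g"
    unfolding linear_on_def span_singleton
    by (auto simp: g scaleR_scaleR distrib_right simp flip: scaleR_add_left)
qed

lemma subspace_Int_span_singleton:
  assumes T: "subspace T" and v: "v \<notin> T"
  shows "T \<inter> span {v} \<subseteq> {0}"
proof clarify
  fix x assume x: "x \<in> T" "x \<in> span {v}"
  then obtain a where a: "x = a *\<^sub>R v" by (auto simp: span_singleton)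
  have "a = 0"
  proof (rule ccontr)
    assume "a \<noteq> 0"
    hence "v = inverse a *\<^sub>R x" using a by simp
    thus False using v x(1) T subspace_scale by metis
  qed
  thus "x = 0" using a by simp
qed

lemma hahn_banach_step:
  fixes h :: "'a::real_normed_vector \<Rightarrow> real"
  assumes T: "subspace T" and lin: "linear_on T h" and bnd: "norm_bounded_on T h r" and r: "r \<ge> 0"
  obtains h' where "linear_on (span (insert v T)) h'" "norm_bounded_on (span (insert v T)) h' r"
    and "\<And>x. x \<in> T \<Longrightarrow> h' x = h x"
proof (cases "v \<in> T")
  case True
  have "span (insert v T) = span T" using True by (intro span_redundant span_base)
  also have "span T = T" by (rule span_eq_iff[THEN iffD2, OF T])
  finally have "span (insert v T) = T" .
  with that[of h] lin bnd show thesis by simp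
next
  case vT: False
  obtain c where lower: "\<And>t. t \<in> T \<Longrightarrow> h t - r * norm (t - v) \<le> c"
    and upper: "\<And>s. s \<in> T \<Longrightarrow> c \<le> r * norm (s + v) - h s"
    using hahn_banach_gap[OF T lin bnd r] by blast
  have "v \<noteq> 0" using vT T subspace_0 by blast
  then obtain g where g_lin: "linear_on (span {v}) g" and g: "\<And>a. g (a *\<^sub>R v) = a * c"
    using linear_on_span_singleton by blast
  note TV = subspace_Int_span_singleton[OF T vT]
  obtain h' where h': "linear_on {t + w | t w. t \<in> T \<and> w \<in> span {v}} h'"
    and h'_eq: "\<And>t w. t \<in> T \<Longrightarrow> w \<in> span {v} \<Longrightarrow> h' (t + w) = h t + g w"
    using linear_on_direct_sum[OF T subspace_span TV lin g_lin] by blast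
  have h'_line: "h' (t + a *\<^sub>R v) = h t + a * c" if "t \<in> T" for t a
    using h'_eq[OF that span_scale[OF span_base[OF singletonI]]] g by simp
  have span_eq: "{t + w | t w. t \<in> T \<and> w \<in> span {v}} = span (insert v T)"
    unfolding span_insert_subspace[OF T] span_singleton by blast
  have "\<bar>h t + a * c\<bar> \<le> r * norm (t + a *\<^sub>R v)" if t: "t \<in> T" for t a
  proof -
    have "- t \<in> T" using t T subspace_neg by blast
    from hahn_banach_gap_bound[OF T lin bnd lower upper this, of "- a"]
    have "- (h t + a * c) \<le> r * norm (t + a *\<^sub>R v)"
      using linear_on_scale[OF lin t, of "-1"] norm_minus_cancel[of "t + a *\<^sub>R v"] by simp
    thus ?thesis using hahn_banach_gap_bound[OF T lin bnd lower upper t, of a] by linarith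
  qed
  hence "norm_bounded_on (span (insert v T)) h' r"
    unfolding norm_bounded_on_def span_insert_subspace[OF T] using h'_line by auto
  moreover have "h' x = h x" if "x \<in> T" for x
    using h'_line[OF that, of 0] by simp
  ultimately show thesis using that h' span_eq by simp
qed

lemma hahn_banach_finite:
  fixes h :: "'a::real_normed_vector \<Rightarrow> real"
  assumes B: "finite B" and T: "subspace T" and lin: "linear_on T h" and bnd: "norm_bounded_on T h r"
    and r: "r \<ge> 0"
  shows "\<exists>h'. linear_on (span (T \<union> B)) h' \<and> norm_bounded_on (span (T \<union> B)) h' r
    \<and> (\<forall>x\<in>T. h' x = h x)"
  using B
proof (induction B rule: finite_induct)
  case empty
  have "span (T \<union> {}) = T" using T by (simp add: span_eq_iff)
  thus ?case using lin bnd by (simp only:) blast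
next
  case (insert v B)
  then obtain h1 where h1: "linear_on (span (T \<union> B)) h1" "norm_bounded_on (span (T \<union> B)) h1 r"
    "\<And>x. x \<in> T \<Longrightarrow> h1 x = h x"
    by blast
  obtain h2 where h2: "linear_on (span (insert v (span (T \<union> B)))) h2"
     "norm_bounded_on (span (insert v (span (T \<union> B)))) h2 r" "\<And>x. x \<in> span (T \<union> B) \<Longrightarrow> h2 x = h1 x"
    using hahn_banach_step[OF subspace_span h1(1,2) r] by blast
  have "span (insert v (span (T \<union> B))) = span (T \<union> insert v B)"
    by (simp only: Un_insert_right span_insert span_span)
  moreover have "h2 x = h x" if "x \<in> T" for x
    using that h1(3) h2(3) span_base[of x "T \<union> B"] by simp
  ultimately show ?case using h2(1,2) by auto
qed

lemma functional_extension_finite_codim: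
  fixes h :: "'a::real_normed_vector \<Rightarrow> real"
  assumes T: "subspace T" and B: "finite B" and dense: "closure (span (T \<union> B)) = UNIV"
    and lin: "linear_on T h" and bnd: "norm_bounded_on T h r" and r: "r \<ge> 0"
  obtains G :: "'a \<Rightarrow>\<^sub>L real" where "\<And>x. x \<in> T \<Longrightarrow> G x = h x" "norm G \<le> r"
proof -
  obtain h' where h': "linear_on (span (T \<union> B)) h'" "norm_bounded_on (span (T \<union> B)) h' r"
    and h'_eq: "\<And>x. x \<in> T \<Longrightarrow> h' x = h x"
    using hahn_banach_finite[OF B T lin bnd r] by blast
  obtain G :: "'a \<Rightarrow>\<^sub>L real" where G: "\<And>x. x \<in> span (T \<union> B) \<Longrightarrow> G x = h' x" "norm G \<le> r"
    using functional_extension_from_dense[OF subspace_span dense h' r] by blast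
  show thesis by (rule that[of G]) (simp_all add: G h'_eq span_base)
qed

lemma subspace_plus_span:
  assumes "subspace Z"
  shows "subspace {x. \<exists>b\<in>span B. x - b \<in> Z}"
  unfolding subspace_def
proof (intro conjI ballI allI; clarsimp)
  show "\<exists>b\<in>span B. - b \<in> Z" using assms span_zero subspace_0 by force
next
  fix x y b b' assume b: "b \<in> span B" "x - b \<in> Z" "b' \<in> span B" "y - b' \<in> Z"
  have "(x + y) - (b + b') = (x - b) + (y - b')" by (simp add: algebra_simps)
  hence "(x + y) - (b + b') \<in> Z" using b assms subspace_add by metis
  thus "\<exists>b\<in>span B. x + y - b \<in> Z" using b span_add by blast
next
  fix c x b assume b: "b \<in> span B" "x - b \<in> Z"
  have "c *\<^sub>R x - c *\<^sub>R b = c *\<^sub>R (x - b)" by (simp add: scaleR_diff_right)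
  hence "c *\<^sub>R x - c *\<^sub>R b \<in> Z" using b assms subspace_scale by metis
  thus "\<exists>b\<in>span B. c *\<^sub>R x - b \<in> Z" using b span_scale by blast
qed

lemma infdist_line_bound:
  fixes Z :: "'a::real_normed_vector set"
  assumes Z: "closed Z" "subspace Z" and v: "v \<notin> Z"
  obtains \<delta> where "\<delta> > 0" "\<And>a z. z \<in> Z \<Longrightarrow> \<bar>a\<bar> * \<delta> \<le> norm (a *\<^sub>R v + z)"
proof
  have "Z \<noteq> {}" using subspace_0[OF Z(2)] by blast
  thus "infdist v Z > 0" by (rule infdist_pos_not_in_closed[OF Z(1) _ v])
next
  fix a z assume z: "z \<in> Z"
  show "\<bar>a\<bar> * infdist v Z \<le> norm (a *\<^sub>R v + z)"
  proof (cases "a = 0")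
    case False
    have "- (inverse a *\<^sub>R z) \<in> Z" using z Z(2) subspace_scale subspace_neg by blast
    hence "infdist v Z \<le> norm (v + inverse a *\<^sub>R z)" using infdist_le by (fastforce simp: dist_norm)
    hence "\<bar>a\<bar> * infdist v Z \<le> \<bar>a\<bar> * norm (v + inverse a *\<^sub>R z)" by (simp add: mult_left_mono)
    also have "\<dots> = norm (a *\<^sub>R (v + inverse a *\<^sub>R z))" by simp
    also have "a *\<^sub>R (v + inverse a *\<^sub>R z) = a *\<^sub>R v + z" using False by (simp add: scaleR_add_right)
    finally show ?thesis .
  qed simp
qed

lemma closed_subspace_plus_line:
  fixes Z :: "'a::real_normed_vector set"
  assumes Z: "closed Z" "subspace Z"
  shows "closed {x. \<exists>a. x - a *\<^sub>R v \<in> Z}"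
proof (cases "v \<in> Z")
  case True
  have "{x. \<exists>a. x - a *\<^sub>R v \<in> Z} = Z"
  proof (intro set_eqI iffI)
    fix x assume "x \<in> {x. \<exists>a. x - a *\<^sub>R v \<in> Z}"
    then obtain a where "x - a *\<^sub>R v \<in> Z" by blast
    hence "(x - a *\<^sub>R v) + a *\<^sub>R v \<in> Z" using True Z(2) subspace_add subspace_scale by blast
    thus "x \<in> Z" by simp
  qed (auto intro: exI[of _ 0])
  thus ?thesis using Z(1) by simp
next
  case False
  obtain \<delta> where \<delta>: "\<delta> > 0" "\<And>a z. z \<in> Z \<Longrightarrow> \<bar>a\<bar> * \<delta> \<le> norm (a *\<^sub>R v + z)"
    using infdist_line_bound[OF Z False] by blast
  show ?thesis
    unfolding closed_sequential_limits
  proof (intro allI impI, elim conjE)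
    fix s l assume s: "\<forall>n. s n \<in> {x. \<exists>a. x - a *\<^sub>R v \<in> Z}" and sl: "s \<longlonglongrightarrow> l"
    hence "\<forall>n. \<exists>a. s n - a *\<^sub>R v \<in> Z" by blast
    then obtain a where a: "\<And>n. s n - a n *\<^sub>R v \<in> Z" by metis
    have "Cauchy a"
    proof (rule CauchyI)
      fix e :: real assume e: "e > 0"
      obtain M where M: "\<And>m n. m \<ge> M \<Longrightarrow> n \<ge> M \<Longrightarrow> norm (s m - s n) < e * \<delta>"
        using CauchyD[OF LIMSEQ_imp_Cauchy[OF sl], of "e * \<delta>"] e \<delta>(1) by auto
      have "norm (a m - a n) < e" if "m \<ge> M" "n \<ge> M" for m n
      proof -
        have "(s m - a m *\<^sub>R v) - (s n - a n *\<^sub>R v) \<in> Z" using a Z(2) subspace_diff by blast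
        from \<delta>(2)[OF this, of "a m - a n"]
        have "\<bar>a m - a n\<bar> * \<delta> \<le> norm (s m - s n)" by (simp add: algebra_simps)
        also have "\<dots> < e * \<delta>" using M that by blast
        finally show ?thesis using \<delta>(1) by simp
      qed
      thus "\<exists>M. \<forall>m\<ge>M. \<forall>n\<ge>M. norm (a m - a n) < e" by blast
    qed
    then obtain \<alpha> where "a \<longlonglongrightarrow> \<alpha>" using Cauchy_convergent_iff convergent_def by blast
    hence "(\<lambda>n. s n - a n *\<^sub>R v) \<longlonglongrightarrow> l - \<alpha> *\<^sub>R v" using sl by (intro tendsto_intros)
    hence "l - \<alpha> *\<^sub>R v \<in> Z" by (rule closed_sequentially[OF Z(1), rotated]) (use a in blast)
    thus "l \<in> {x. \<exists>a. x - a *\<^sub>R v \<in> Z}" by blast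
  qed
qed

lemma plus_span_insert:
  "{x. \<exists>b\<in>span (insert v B). x - b \<in> Z} = {x. \<exists>a. x - a *\<^sub>R v \<in> {y. \<exists>b\<in>span B. y - b \<in> Z}}"
proof (intro set_eqI iffI; clarsimp)
  fix x b assume b: "b \<in> span (insert v B)" "x - b \<in> Z"
  then obtain a where "b - a *\<^sub>R v \<in> span B" by (auto simp: span_insert)
  moreover have "x - a *\<^sub>R v - (b - a *\<^sub>R v) \<in> Z" using b by simp
  ultimately show "\<exists>a. \<exists>b\<in>span B. x - a *\<^sub>R v - b \<in> Z" by blast
next
  fix x a b assume ab: "b \<in> span B" "x - a *\<^sub>R v - b \<in> Z"
  have "a *\<^sub>R v + b \<in> span (insert v B)"
    using ab(1) by (meson insertI1 span_add span_base span_mono span_scale subset_insertI subsetD)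
  moreover have "x - (a *\<^sub>R v + b) \<in> Z" using ab(2) by (simp add: algebra_simps)
  ultimately show "\<exists>b\<in>span (insert v B). x - b \<in> Z" by blast
qed

lemma closed_subspace_plus_finite_span:
  fixes Z :: "'a::real_normed_vector set"
  assumes Z: "closed Z" "subspace Z" and B: "finite B"
  shows "closed {x. \<exists>b\<in>span B. x - b \<in> Z}"
  using B
proof (induction B rule: finite_induct)
  case empty
  thus ?case using Z(1) by simp
next
  case (insert v B)
  thus ?case unfolding plus_span_insert
    by (intro closed_subspace_plus_line subspace_plus_span Z(2))
qed

lemma norm_le_of_line_component_bound:
  fixes b v z :: "'a::real_normed_vector"
  assumes C': "C' \<ge> 0" and \<delta>: "\<delta> > 0"
    and rest: "norm (b - a *\<^sub>R v) \<le> C' * norm (b - a *\<^sub>R v + z)"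
    and line: "\<bar>a\<bar> * \<delta> \<le> norm (b + z)"
  shows "norm b \<le> (C' + (C' + 1) * norm v / \<delta>) * norm (b + z)"
proof -
  define N where "N = norm (b + z)"
  have "\<bar>a\<bar> \<le> N / \<delta>" using line \<delta> unfolding N_def by (simp add: pos_le_divide_eq)
  hence av: "\<bar>a\<bar> * norm v \<le> N / \<delta> * norm v" by (rule mult_right_mono) simp
  have "norm (b - a *\<^sub>R v + z) \<le> N + \<bar>a\<bar> * norm v"
    using norm_triangle_ineq4[of "b + z" "a *\<^sub>R v"] unfolding N_def by (simp add: algebra_simps)
  hence "norm (b - a *\<^sub>R v) \<le> C' * (N + \<bar>a\<bar> * norm v)"
    using rest C' by (meson mult_left_mono order_trans)
  also have "\<dots> \<le> C' * (N + N / \<delta> * norm v)"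
    using av C' by (intro mult_left_mono add_left_mono)
  finally have "norm b \<le> C' * (N + N / \<delta> * norm v) + N / \<delta> * norm v"
    using norm_triangle_ineq[of "b - a *\<^sub>R v" "a *\<^sub>R v"] av by simp
  also have "\<dots> = (C' + (C' + 1) * norm v / \<delta>) * N" using \<delta> by (simp add: field_simps)
  finally show ?thesis unfolding N_def .
qed

lemma projection_bound_finite_span:
  fixes Z :: "'a::real_normed_vector set"
  assumes Z: "closed Z" "subspace Z" and B: "finite B" and BZ: "span B \<inter> Z \<subseteq> {0}"
  obtains C where "C \<ge> 0" "\<And>b z. b \<in> span B \<Longrightarrow> z \<in> Z \<Longrightarrow> norm b \<le> C * norm (b + z)"
proof -
  have "span B \<inter> Z \<subseteq> {0} \<Longrightarrow> \<exists>C\<ge>0. \<forall>b\<in>span B. \<forall>z\<in>Z. norm b \<le> C * norm (b + z)"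
    using B
  proof (induction B rule: finite_induct)
    case empty
    thus ?case by (intro exI[of _ 0]) auto
  next
    case (insert v B)
    show ?case
    proof (cases "v \<in> span B")
      case True
      thus ?thesis using insert by (simp add: span_redundant)
    next
      case vB: False
      have sub: "span B \<subseteq> span (insert v B)" by (intro span_mono) auto
      hence "span B \<inter> Z \<subseteq> {0}" using insert.prems by blast
      then obtain C' where C': "C' \<ge> 0" "\<And>b z. b \<in> span B \<Longrightarrow> z \<in> Z \<Longrightarrow> norm b \<le> C' * norm (b + z)"
        using insert.IH by blast
      define Z' where "Z' = {x. \<exists>b\<in>span B. x - b \<in> Z}"
      have Z': "closed Z'" "subspace Z'"
        unfolding Z'_def using closed_subspace_plus_finite_span[OF Z insert.hyps(1)]
        by (simp_all add: subspace_plus_span[OF Z(2)])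
      have "v \<notin> Z'"
      proof
        assume "v \<in> Z'"
        then obtain b where b: "b \<in> span B" "v - b \<in> Z" unfolding Z'_def by blast
        have "v \<in> span (insert v B)" "b \<in> span (insert v B)" using b sub by (auto intro: span_base)
        hence "v - b \<in> span (insert v B)" by (rule span_diff)
        hence "v - b = 0" using b insert.prems by blast
        thus False using b vB by simp
      qed
      then obtain \<delta> where \<delta>: "\<delta> > 0" "\<And>a z. z \<in> Z' \<Longrightarrow> \<bar>a\<bar> * \<delta> \<le> norm (a *\<^sub>R v + z)"
        using infdist_line_bound[OF Z'] by blast
      define C where "C = C' + (C' + 1) * norm v / \<delta>"
      have "norm b \<le> C * norm (b + z)" if b: "b \<in> span (insert v B)" and z: "z \<in> Z" for b z
      proof -
        obtain a where a: "b - a *\<^sub>R v \<in> span B" using b by (auto simp: span_insert)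
        have "(b - a *\<^sub>R v) + z \<in> Z'" unfolding Z'_def using a z by force
        from \<delta>(2)[OF this, of a] have "\<bar>a\<bar> * \<delta> \<le> norm (b + z)" by simp
        thus ?thesis unfolding C_def using norm_le_of_line_component_bound C'(1) C'(2)[OF a z] \<delta>(1)
          by blast
      qed
      moreover have "C \<ge> 0" unfolding C_def using C'(1) \<delta>(1) by simp
      ultimately show ?thesis by blast
    qed
  qed
  from this[OF BZ] that show thesis by blast
qed

lemma blinfun_vanishes_on_span:
  fixes f :: "'a::real_normed_vector \<Rightarrow>\<^sub>L real"
  assumes "\<And>x. x \<in> S \<Longrightarrow> f x = 0" "x \<in> span S"
  shows "f x = 0"
  using assms by (rule linear_eq_0_on_span[OF bounded_linear.linear[OF blinfun.bounded_linear_right]])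

lemma blinfun_eq_0_if_vanishes_on_dense_span:
  fixes f :: "'a::real_normed_vector \<Rightarrow>\<^sub>L real"
  assumes "closure (span S) = UNIV" "\<And>x. x \<in> S \<Longrightarrow> f x = 0"
  shows "f = 0"
proof (rule blinfun_eqI)
  fix x
  show "f x = blinfun_apply 0 x"
    using continuous_eq_on_dense[OF assms(1), of f "\<lambda>_. 0"] blinfun_vanishes_on_span[OF assms(2)]
    by (simp add: linear_continuous_on[OF blinfun.bounded_linear_right])
qed

lemma FMD_finite_dim: "FMD E \<Longrightarrow> \<exists>B. finite B \<and> E k = span B"
  and FMD_dense: "FMD E \<Longrightarrow> closure (span (\<Union>k. E k)) = UNIV"
  and FMD_independent: "FMD E \<Longrightarrow> E k \<inter> closure (span (\<Union>j\<in>-{k}. E j)) = {0}"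
  by (simp_all add: FMD_def)

lemma FMD_subspace: "FMD E \<Longrightarrow> subspace (E k)"
  by (metis FMD_finite_dim subspace_span)

lemma FMD_dense_subspace:
  assumes "FMD E" "subspace U" "\<And>j. E j \<subseteq> U"
  shows "closure U = UNIV"
proof -
  have "span (\<Union>j. E j) \<subseteq> U" using assms(2,3) by (intro span_minimal) auto
  thus ?thesis using closure_mono FMD_dense[OF assms(1)] by blast
qed

lemma functional_on_bounded_direct_sum:
  fixes \<phi> :: "'a::real_normed_vector \<Rightarrow>\<^sub>L real"
  assumes V: "subspace V" and W: "subspace W"
    and C: "\<And>v w. v \<in> V \<Longrightarrow> w \<in> W \<Longrightarrow> norm v \<le> C * norm (v + w)"
  obtains h where "linear_on {v + w | v w. v \<in> V \<and> w \<in> W} h"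
    and "norm_bounded_on {v + w | v w. v \<in> V \<and> w \<in> W} h (norm \<phi> * C)"
    and "\<And>v w. v \<in> V \<Longrightarrow> w \<in> W \<Longrightarrow> h (v + w) = \<phi> v"
proof -
  have "v = 0" if "v \<in> V" "v \<in> W" for v
    using C[of v "- v"] that subspace_neg[OF W] by simp
  hence VW: "V \<inter> W \<subseteq> {0}" by blast
  have "linear_on W (\<lambda>_. 0)" by (simp add: linear_on_def)
  then obtain h where h: "linear_on {v + w | v w. v \<in> V \<and> w \<in> W} h"
    and h_eq: "\<And>v w. v \<in> V \<Longrightarrow> w \<in> W \<Longrightarrow> h (v + w) = \<phi> v + 0"
    using linear_on_direct_sum[OF V W VW linear_on_blinfun] by blast
  have "\<bar>h (v + w)\<bar> \<le> norm \<phi> * C * norm (v + w)" if vw: "v \<in> V" "w \<in> W" for v w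
  proof -
    have "\<bar>h (v + w)\<bar> \<le> norm \<phi> * norm v" using h_eq[OF vw] norm_blinfun[of \<phi> v] by simp
    also have "\<dots> \<le> norm \<phi> * (C * norm (v + w))" using C[OF vw] by (intro mult_left_mono) auto
    finally show ?thesis by (simp add: mult.assoc)
  qed
  hence "norm_bounded_on {v + w | v w. v \<in> V \<and> w \<in> W} h (norm \<phi> * C)"
    unfolding norm_bounded_on_def by blast
  with that h h_eq show thesis by simp
qed

lemma biorth_extension:
  fixes E :: "nat \<Rightarrow> 'a::real_normed_vector set" and \<phi> :: "'a \<Rightarrow>\<^sub>L real"
  assumes E: "FMD E"
  obtains \<psi> where "\<psi> \<in> biorth E k" "\<And>x. x \<in> E k \<Longrightarrow> \<psi> x = \<phi> x"
proof -
  obtain Bk where Bk: "finite Bk" "E k = span Bk" using FMD_finite_dim[OF E] by blast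
  define W where "W = span (\<Union>j\<in>-{k}. E j)"
  define U where "U = {e + w | e w. e \<in> E k \<and> w \<in> W}"
  have Ek: "subspace (E k)" and W: "subspace W" using FMD_subspace[OF E] by (simp_all add: W_def)
  have "E k \<inter> closure W = {0}" unfolding W_def by (rule FMD_independent[OF E])
  hence "span Bk \<inter> closure W \<subseteq> {0}" using Bk(2) by simp
  then obtain C where C: "C \<ge> 0" "\<And>e z. e \<in> span Bk \<Longrightarrow> z \<in> closure W \<Longrightarrow> norm e \<le> C * norm (e + z)"
    using projection_bound_finite_span[OF closed_closure subspace_closure[OF W] Bk(1)] by blast
  have "norm e \<le> C * norm (e + w)" if "e \<in> E k" "w \<in> W" for e w
    using C(2) that closure_subset Bk(2) by blast
  then obtain h where h: "linear_on U h" "norm_bounded_on U h (norm \<phi> * C)"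
    and h_eq: "\<And>e w. e \<in> E k \<Longrightarrow> w \<in> W \<Longrightarrow> h (e + w) = \<phi> e"
    using functional_on_bounded_direct_sum[OF Ek W] unfolding U_def by blast
  have U: "subspace U" unfolding U_def by (rule subspace_sums[OF Ek W])
  have U_I: "e + w \<in> U" if "e \<in> E k" "w \<in> W" for e w unfolding U_def using that by blast
  have "E j \<subseteq> U" for j
  proof
    fix x assume x: "x \<in> E j"
    show "x \<in> U"
    proof (cases "j = k")
      case True
      thus ?thesis using U_I[of x 0] x subspace_0[OF W] by simp
    next
      case False
      hence "x \<in> W" unfolding W_def using x by (intro span_base) blast
      thus ?thesis using U_I[of 0 x] subspace_0[OF Ek] by simp
    qed
  qed
  hence dense: "closure U = UNIV" by (rule FMD_dense_subspace[OF E U])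
  have "norm \<phi> * C \<ge> 0" using C(1) by simp
  then obtain G :: "'a \<Rightarrow>\<^sub>L real" where G: "\<And>x. x \<in> U \<Longrightarrow> G x = h x"
    using functional_extension_from_dense[OF U dense h] by blast
  have "G x = \<phi> x" if x: "x \<in> E k" for x
    using G[OF U_I[OF x subspace_0[OF W]]] h_eq[OF x subspace_0[OF W]] by simp
  moreover have "G \<in> biorth E k"
    unfolding biorth_def
  proof (intro CollectI allI impI ballI)
    fix j x assume "j \<noteq> k" "x \<in> E j"
    hence x: "x \<in> W" unfolding W_def by (intro span_base) blast
    thus "G x = 0" using G[OF U_I[OF subspace_0[OF Ek] x]] h_eq[OF subspace_0[OF Ek] x] by simp
  qed
  ultimately show thesis using that by blast
qed

lemma span_biorth_if_vanishes_on_tail: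
  fixes E :: "nat \<Rightarrow> 'a::real_normed_vector set" and \<phi> :: "'a \<Rightarrow>\<^sub>L real"
  assumes E: "FMD E" and tail: "\<And>j x. j > n \<Longrightarrow> x \<in> E j \<Longrightarrow> \<phi> x = 0"
  shows "\<phi> \<in> span (\<Union>k. biorth E k)"
proof -
  have "\<forall>k. \<exists>\<psi>. \<psi> \<in> biorth E k \<and> (\<forall>x\<in>E k. \<psi> x = \<phi> x)"
    using biorth_extension[OF E] by metis
  from choice[OF this] obtain \<Psi> where \<Psi>: "\<And>k. \<Psi> k \<in> biorth E k" "\<And>k x. x \<in> E k \<Longrightarrow> \<Psi> k x = \<phi> x"
    by blast
  have "\<phi> - sum \<Psi> {..n} = 0"
  proof (rule blinfun_eq_0_if_vanishes_on_dense_span[OF FMD_dense[OF E]])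
    fix x assume "x \<in> (\<Union>j. E j)"
    then obtain j where x: "x \<in> E j" by blast
    have "\<Psi> k x = (if k = j then \<phi> x else 0)" for k
      using \<Psi>(1)[of k] \<Psi>(2)[OF x] x unfolding biorth_def by auto
    hence "(\<phi> - sum \<Psi> {..n}) x = \<phi> x - (if j \<le> n then \<phi> x else 0)"
      by (simp add: blinfun.diff_left blinfun.sum_left sum.delta')
    thus "(\<phi> - sum \<Psi> {..n}) x = 0" using tail[OF _ x] by auto
  qed
  hence "\<phi> = sum \<Psi> {..n}" by simp
  also have "\<dots> \<in> span (\<Union>k. biorth E k)" using \<Psi>(1) by (intro span_sum span_base) blast
  finally show ?thesis .
qed

lemma span_biorth_vanishes_on_tail:
  fixes E :: "nat \<Rightarrow> 'a::real_normed_vector set"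
  assumes "g \<in> span (\<Union>k. biorth E k)"
  obtains m where "\<And>j x. j > m \<Longrightarrow> x \<in> E j \<Longrightarrow> g x = 0"
proof -
  define P where "P = {g :: 'a \<Rightarrow>\<^sub>L real. \<exists>m. \<forall>j>m. \<forall>x\<in>E j. g x = 0}"
  have "subspace P"
    unfolding subspace_def
  proof (intro conjI ballI allI)
    show "0 \<in> P" unfolding P_def by simp
  next
    fix a b assume "a \<in> P" "b \<in> P"
    then obtain m1 m2 where "\<forall>j>m1. \<forall>x\<in>E j. a x = 0" "\<forall>j>m2. \<forall>x\<in>E j. b x = 0"
      unfolding P_def by blast
    hence "\<forall>j>max m1 m2. \<forall>x\<in>E j. (a + b) x = 0" by (auto simp: blinfun.add_left)
    thus "a + b \<in> P" unfolding P_def by blast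
  next
    fix c :: real and a assume "a \<in> P"
    then obtain m where "\<forall>j>m. \<forall>x\<in>E j. a x = 0" unfolding P_def by blast
    hence "\<forall>j>m. \<forall>x\<in>E j. (c *\<^sub>R a) x = 0" by (simp add: blinfun.scaleR_left)
    thus "c *\<^sub>R a \<in> P" unfolding P_def by blast
  qed
  moreover have "(\<Union>k. biorth E k) \<subseteq> P"
  proof
    fix f assume "f \<in> (\<Union>k. biorth E k)"
    then obtain k where "f \<in> biorth E k" by blast
    hence "\<forall>j>k. \<forall>x\<in>E j. f x = 0" unfolding biorth_def by auto
    thus "f \<in> P" unfolding P_def by blast
  qed
  ultimately have "g \<in> P" using assms span_minimal by blast
  with that show thesis unfolding P_def by blast
qed

lemma bdd_above_restr_norm_set:
  fixes f :: "'a::real_normed_vector \<Rightarrow>\<^sub>L real"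
  shows "bdd_above {\<bar>f x\<bar> | x. x \<in> S \<and> norm x \<le> 1}"
proof (rule bdd_aboveI)
  fix y assume "y \<in> {\<bar>f x\<bar> | x. x \<in> S \<and> norm x \<le> 1}"
  then obtain x where "y = \<bar>f x\<bar>" "norm x \<le> 1" by blast
  thus "y \<le> norm f"
    using norm_blinfun[of f x] mult_left_mono[of "norm x" 1 "norm f"] by simp
qed

lemma abs_le_restr_norm:
  fixes f :: "'a::real_normed_vector \<Rightarrow>\<^sub>L real"
  shows "x \<in> S \<Longrightarrow> norm x \<le> 1 \<Longrightarrow> \<bar>f x\<bar> \<le> restr_norm f S"
proof -
  assume "x \<in> S" "norm x \<le> 1"
  hence "\<bar>f x\<bar> \<in> {\<bar>f x\<bar> | x. x \<in> S \<and> norm x \<le> 1}" by blast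
  thus ?thesis unfolding restr_norm_def by (rule cSup_upper[OF _ bdd_above_restr_norm_set])
qed

lemma restr_norm_nonneg:
  fixes f :: "'a::real_normed_vector \<Rightarrow>\<^sub>L real"
  shows "0 \<in> S \<Longrightarrow> 0 \<le> restr_norm f S"
  using abs_le_restr_norm[of 0 S f] by simp

lemma restr_norm_set_nonempty:
  fixes f :: "'a::real_normed_vector \<Rightarrow>\<^sub>L real"
  shows "0 \<in> S \<Longrightarrow> {\<bar>f x\<bar> | x. x \<in> S \<and> norm x \<le> 1} \<noteq> {}"
proof -
  assume "0 \<in> S"
  hence "\<bar>f 0\<bar> \<in> {\<bar>f x\<bar> | x. x \<in> S \<and> norm x \<le> 1}" by (intro CollectI exI[of _ 0]) simp
  thus ?thesis by blast
qed

lemma restr_norm_le: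
  fixes f :: "'a::real_normed_vector \<Rightarrow>\<^sub>L real"
  assumes "0 \<in> S" "\<And>x. x \<in> S \<Longrightarrow> norm x \<le> 1 \<Longrightarrow> \<bar>f x\<bar> \<le> b"
  shows "restr_norm f S \<le> b"
  unfolding restr_norm_def
proof (rule cSup_least[OF restr_norm_set_nonempty[OF assms(1)]])
  fix y assume "y \<in> {\<bar>f x\<bar> | x. x \<in> S \<and> norm x \<le> 1}"
  then obtain x where "y = \<bar>f x\<bar>" "x \<in> S" "norm x \<le> 1" by blast
  thus "y \<le> b" using assms(2) by simp
qed

lemma less_restr_norm_obtains:
  fixes f :: "'a::real_normed_vector \<Rightarrow>\<^sub>L real"
  assumes "0 \<in> S" "t < restr_norm f S"
  obtains x where "x \<in> S" "norm x \<le> 1" "t < \<bar>f x\<bar>"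
proof -
  obtain y where "y \<in> {\<bar>f x\<bar> | x. x \<in> S \<and> norm x \<le> 1}" "t < y"
    using assms(2) less_cSup_iff[OF restr_norm_set_nonempty[OF assms(1)] bdd_above_restr_norm_set]
    unfolding restr_norm_def by blast
  with that show thesis by blast
qed

lemma abs_le_restr_norm_mult:
  fixes f :: "'a::real_normed_vector \<Rightarrow>\<^sub>L real"
  assumes "subspace S" "x \<in> S"
  shows "\<bar>f x\<bar> \<le> restr_norm f S * norm x"
proof (cases "x = 0")
  case False
  have "inverse (norm x) *\<^sub>R x \<in> S" using assms subspace_scale by blast
  hence "\<bar>f (inverse (norm x) *\<^sub>R x)\<bar> \<le> restr_norm f S"
    using False by (intro abs_le_restr_norm) simp_all
  thus ?thesis using False by (simp add: blinfun.scaleR_right abs_mult field_simps)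
qed simp

lemma restr_norm_le_norm_diff:
  fixes f g :: "'a::real_normed_vector \<Rightarrow>\<^sub>L real"
  assumes "0 \<in> S" "\<And>x. x \<in> S \<Longrightarrow> g x = 0"
  shows "restr_norm f S \<le> norm (f - g)"
proof (rule restr_norm_le[OF assms(1)])
  fix x assume "x \<in> S" "norm x \<le> 1"
  hence "\<bar>f x\<bar> = \<bar>(f - g) x\<bar>" using assms(2) by (simp add: blinfun.diff_left)
  also have "\<dots> \<le> norm (f - g)"
    using norm_blinfun[of "f - g" x] \<open>norm x \<le> 1\<close> mult_left_mono[of "norm x" 1 "norm (f - g)"] by simp
  finally show "\<bar>f x\<bar> \<le> norm (f - g)" .
qed

lemma shrinking_imp_restr_norm_tail_tendsto_0:
  fixes E :: "nat \<Rightarrow> 'a::real_normed_vector set"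
  assumes "shrinking E"
  shows "(\<lambda>n. restr_norm f (span (\<Union>j\<in>{n<..}. E j))) \<longlonglongrightarrow> 0"
proof (rule LIMSEQ_I)
  fix r :: real assume "r > 0"
  moreover have "f \<in> closure (span (\<Union>k. biorth E k))" using assms unfolding shrinking_def by simp
  ultimately obtain g where g: "g \<in> span (\<Union>k. biorth E k)" "dist g f < r"
    unfolding closure_approachable by blast
  obtain m where m: "\<And>j x. j > m \<Longrightarrow> x \<in> E j \<Longrightarrow> g x = 0"
    using span_biorth_vanishes_on_tail[OF g(1)] by blast
  have "\<bar>restr_norm f (span (\<Union>j\<in>{n<..}. E j))\<bar> < r" if "n \<ge> m" for n
  proof -
    have "g x = 0" if "x \<in> span (\<Union>j\<in>{n<..}. E j)" for x
    proof (rule blinfun_vanishes_on_span[OF _ that])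
      fix y assume "y \<in> (\<Union>j\<in>{n<..}. E j)"
      then obtain j where "j > n" "y \<in> E j" by blast
      moreover from \<open>j > n\<close> have "j > m" using \<open>n \<ge> m\<close> by linarith
      ultimately show "g y = 0" using m by blast
    qed
    hence "restr_norm f (span (\<Union>j\<in>{n<..}. E j)) \<le> norm (f - g)"
      by (intro restr_norm_le_norm_diff span_zero)
    moreover have "norm (f - g) < r" using g(2) by (simp add: dist_norm norm_minus_commute)
    ultimately show ?thesis using restr_norm_nonneg[where f = f, OF span_zero] by simp
  qed
  thus "\<exists>no. \<forall>n\<ge>no. norm (restr_norm f (span (\<Union>j\<in>{n<..}. E j)) - 0) < r" by auto
qed

lemma restr_norm_tail_tendsto_0_imp_shrinking:
  fixes E :: "nat \<Rightarrow> 'a::real_normed_vector set"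
  assumes E: "FMD E"
    and lim: "\<And>f::'a \<Rightarrow>\<^sub>L real. (\<lambda>n. restr_norm f (span (\<Union>j\<in>{n<..}. E j))) \<longlonglongrightarrow> 0"
  shows "shrinking E"
  unfolding shrinking_def
proof (intro set_eqI iffI UNIV_I)
  fix f :: "'a \<Rightarrow>\<^sub>L real"
  show "f \<in> closure (span (\<Union>k. biorth E k))"
    unfolding closure_approachable
  proof (intro allI impI)
    fix e :: real assume "e > 0"
    obtain n where "norm (restr_norm f (span (\<Union>j\<in>{n<..}. E j)) - 0) < e"
      using LIMSEQ_D[OF lim[of f] \<open>e > 0\<close>] by blast
    hence n: "restr_norm f (span (\<Union>j\<in>{n<..}. E j)) < e" by (simp add: abs_less_iff)
    define T where "T = span (\<Union>j\<in>{n<..}. E j)"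
    define r where "r = restr_norm f T"
    have T: "subspace T" unfolding T_def by simp
    have "\<forall>k. \<exists>B. finite B \<and> E k = span B" using FMD_finite_dim[OF E] by blast
    from choice[OF this] obtain Bj where Bj: "\<And>k. finite (Bj k)" "\<And>k. E k = span (Bj k)"
      by blast
    have fin: "finite (\<Union>j\<in>{..n}. Bj j)" using Bj(1) by blast
    have "E j \<subseteq> span (T \<union> (\<Union>j\<in>{..n}. Bj j))" for j
    proof (cases "j \<le> n")
      case True
      thus ?thesis unfolding Bj(2)[of j] by (intro span_mono) auto
    next
      case False
      hence "E j \<subseteq> T" unfolding T_def by (intro subsetI span_base UN_I[of j]) auto
      thus ?thesis using span_superset by blast
    qed
    hence dense: "closure (span (T \<union> (\<Union>j\<in>{..n}. Bj j))) = UNIV"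
      by (rule FMD_dense_subspace[OF E subspace_span])
    have bounded: "norm_bounded_on T f r"
      unfolding norm_bounded_on_def r_def using abs_le_restr_norm_mult[OF T] by blast
    have "r \<ge> 0" unfolding r_def T_def by (intro restr_norm_nonneg span_zero)
    then obtain G :: "'a \<Rightarrow>\<^sub>L real" where G: "\<And>x. x \<in> T \<Longrightarrow> G x = f x" "norm G \<le> r"
      using functional_extension_finite_codim[OF T fin dense linear_on_blinfun bounded] by blast
    have "f - G \<in> span (\<Union>k. biorth E k)"
    proof (rule span_biorth_if_vanishes_on_tail[OF E])
      fix j x assume "j > n" "x \<in> E j"
      hence "x \<in> T" unfolding T_def by (intro span_base UN_I[of j]) auto
      thus "(f - G) x = 0" using G(1) by (simp add: blinfun.diff_left)
    qed
    moreover have "dist (f - G) f < e" using G(2) n by (simp add: dist_norm r_def T_def)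
    ultimately show "\<exists>g\<in>span (\<Union>k. biorth E k). dist g f < e" by blast
  qed
qed

lemma restr_norm_tail_tendsto_0_imp_weakly_null:
  fixes E :: "nat \<Rightarrow> 'a::real_normed_vector set"
  assumes lim: "\<And>f::'a \<Rightarrow>\<^sub>L real. (\<lambda>n. restr_norm f (span (\<Union>j\<in>{n<..}. E j))) \<longlonglongrightarrow> 0"
    and bounded: "bounded (range y)" and tail: "\<And>n. y n \<in> span (\<Union>j\<in>{n..}. E j)"
  shows "weakly_null y"
  unfolding weakly_null_def
proof
  fix f :: "'a \<Rightarrow>\<^sub>L real"
  obtain M where M: "\<And>n. norm (y n) \<le> M" using bounded unfolding bounded_iff by blast
  have "(\<lambda>n. f (y (Suc n))) \<longlonglongrightarrow> 0"
  proof (rule Lim_null_comparison)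
    have "{Suc n..} = {n<..}" for n by auto
    hence "\<bar>f (y (Suc n))\<bar> \<le> restr_norm f (span (\<Union>j\<in>{n<..}. E j)) * norm (y (Suc n))" for n
      using abs_le_restr_norm_mult[OF subspace_span tail[of "Suc n"]] by simp
    also have "\<dots> n \<le> restr_norm f (span (\<Union>j\<in>{n<..}. E j)) * M" for n
      by (intro mult_left_mono M restr_norm_nonneg span_zero)
    finally show "\<forall>\<^sub>F n in sequentially. norm (f (y (Suc n))) \<le> restr_norm f (span (\<Union>j\<in>{n<..}. E j)) * M"
      by simp
    show "(\<lambda>n. restr_norm f (span (\<Union>j\<in>{n<..}. E j)) * M) \<longlonglongrightarrow> 0"
      using tendsto_mult_right[OF lim[of f], of M] by simp
  qed
  thus "(\<lambda>n. f (y n)) \<longlonglongrightarrow> 0" by (rule LIMSEQ_imp_Suc)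
qed

lemma weakly_null_imp_restr_norm_tail_tendsto_0:
  fixes E :: "nat \<Rightarrow> 'a::real_normed_vector set"
  assumes weakly_null: "\<And>y::nat \<Rightarrow> 'a. bounded (range y) \<Longrightarrow> (\<forall>n. y n \<in> span (\<Union>j\<in>{n..}. E j))
      \<Longrightarrow> weakly_null y"
  shows "(\<lambda>n. restr_norm f (span (\<Union>j\<in>{n<..}. E j))) \<longlonglongrightarrow> 0"
proof -
  let ?R = "\<lambda>n. restr_norm f (span (\<Union>j\<in>{n<..}. E j))"
  have "\<forall>n. \<exists>x. x \<in> span (\<Union>j\<in>{n<..}. E j) \<and> norm x \<le> 1 \<and> ?R n - inverse (real (Suc n)) < \<bar>f x\<bar>"
  proof
    fix n
    show "\<exists>x. x \<in> span (\<Union>j\<in>{n<..}. E j) \<and> norm x \<le> 1 \<and> ?R n - inverse (real (Suc n)) < \<bar>f x\<bar>"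
      by (rule less_restr_norm_obtains[OF span_zero, of "?R n - inverse (real (Suc n))"]) auto
  qed
  from choice[OF this] obtain y where y: "\<And>n. y n \<in> span (\<Union>j\<in>{n<..}. E j)"
    "\<And>n. norm (y n) \<le> 1" "\<And>n. ?R n - inverse (real (Suc n)) < \<bar>f (y n)\<bar>"
    by blast
  have "(\<Union>j\<in>{n<..}. E j) \<subseteq> (\<Union>j\<in>{n..}. E j)" for n by (intro UN_mono) auto
  hence "y n \<in> span (\<Union>j\<in>{n..}. E j)" for n using y(1) span_mono by blast
  moreover have "bounded (range y)" unfolding bounded_iff using y(2) by blast
  ultimately have "(\<lambda>n. f (y n)) \<longlonglongrightarrow> 0" using weakly_null unfolding weakly_null_def by blast
  hence "(\<lambda>n. \<bar>f (y n)\<bar> + inverse (real (Suc n))) \<longlonglongrightarrow> 0"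
    using LIMSEQ_inverse_real_of_nat tendsto_add_zero tendsto_rabs_zero_iff by blast
  moreover have "norm (?R n) \<le> \<bar>f (y n)\<bar> + inverse (real (Suc n))" for n
    using y(3)[of n] restr_norm_nonneg[where f = f, OF span_zero] by simp
  hence "\<forall>\<^sub>F n in sequentially. norm (?R n) \<le> \<bar>f (y n)\<bar> + inverse (real (Suc n))" by simp
  ultimately show ?thesis by (rule Lim_null_comparison[rotated])
qed

theorem proposition2p1:
  fixes E :: "nat \<Rightarrow> 'a::banach set"
  assumes "separable_space TYPE('a)"
    and "FMD E"
  shows "(shrinking E \<longleftrightarrow>
            (\<forall>f::'a \<Rightarrow>\<^sub>L real. (\<lambda>n. restr_norm f (span (\<Union>j\<in>{n<..}. E j))) \<longlonglongrightarrow> 0))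
       \<and> ((\<forall>f::'a \<Rightarrow>\<^sub>L real. (\<lambda>n. restr_norm f (span (\<Union>j\<in>{n<..}. E j))) \<longlonglongrightarrow> 0) \<longleftrightarrow>
            (\<forall>y::nat \<Rightarrow> 'a. bounded (range y) \<and> (\<forall>n. y n \<in> span (\<Union>j\<in>{n..}. E j))
                \<longrightarrow> weakly_null y))"
  using shrinking_imp_restr_norm_tail_tendsto_0
    restr_norm_tail_tendsto_0_imp_shrinking[OF assms(2)]
    restr_norm_tail_tendsto_0_imp_weakly_null
    weakly_null_imp_restr_norm_tail_tendsto_0
  by blast

end
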